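(* Let $\Psi=(X,A,q,g)$ be a standard MDP with $X$ a compact subset of a simplex $\Delta(K)$ ($K$ finite), satisfying for all $x,y\in X$, $a\in A$, $f\in D_1$ and $\alpha,\beta\ge0$: - $|\alpha f(q(x,a))-\beta f(q(y,a))|\le\|\alpha x-\beta y\|_1$, and - $|\alpha g(x,a)-\beta g(y,a)|\le\|\alpha x-\beta y\|_1$. Let $Z=\Delta_f(X)\times[0,1]$ with metric $d((u,y),(u',y'))=\max(d_*(u,u'),|y-y'|)$. Then: 1. $\hat F$ is affine: $\hat F(\lambda z+(1-\lambda)z')=\lambda\hat F(z)+(1-\lambda)\hat F(z')$ for $z,z'\in Z$ and $\lambda\in[0,1]$ (Minkowski combination on the right). 2. $\hat F$ is non expansive: for all $z,z'\in Z$ and $w\in\hat F(z)$ there exists $w'\in\hat F(z')$ with $d(w,w')\le d(z,z')$.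
   Context: $q:X\times A\to\Delta_f(X)$ and $g:X\times A\to[0,1]$, extended linearly in the action to $\Delta_f(A)$. $D_1=\{f\in\mathcal C(\Delta(K)):\ \forall x,y,\ \forall a,b\ge0,\ af(x)-bf(y)\le\|ax-by\|_1\}$, with $f$ extended linearly to finitely supported probabilities, and $d_*(u,v)=\sup_{f\in D_1}\big(f(u)-f(v)\big)$. For $(u,y)\in Z$, $$\hat F(u,y)=\Big\{\Big(\sum_xu(x)q(x,\sigma(x)),\ \sum_xu(x)g(x,\sigma(x))\Big):\ \sigma:X\to\Delta_f(A)\Big\}.$$ *)

theory Defs
  imports "HOL-Analysis.Analysis"
begin

definition Delta_K :: "(real^'k) set" where
  "Delta_K = {x. (\<forall>i. 0 \<le> x$i) \<and> (\<Sum>i\<in>UNIV. x$i) = 1}"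

definition l1norm :: "real^'k \<Rightarrow> real" where
  "l1norm x = (\<Sum>i\<in>UNIV. \<bar>x$i\<bar>)"

definition fsupp :: "('a \<Rightarrow> real) \<Rightarrow> 'a set" where
  "fsupp u = {x. u x \<noteq> 0}"

definition fin_dist :: "'a set \<Rightarrow> ('a \<Rightarrow> real) set" where
  "fin_dist S = {u. finite (fsupp u) \<and> fsupp u \<subseteq> S \<and> (\<forall>x. 0 \<le> u x) \<and> sum u (fsupp u) = 1}"

definition lin_ext :: "('a \<Rightarrow> real) \<Rightarrow> ('a \<Rightarrow> real) \<Rightarrow> real" where
  "lin_ext f u = (\<Sum>x\<in>fsupp u. u x * f x)"

definition D1 :: "(real^'k \<Rightarrow> real) set" where
  "D1 = {f. continuous_on Delta_K f \<and>
          (\<forall>x\<in>Delta_K. \<forall>y\<in>Delta_K. \<forall>a b. 0 \<le> a \<longrightarrow> 0 \<le> b \<longrightarrow>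
             a * f x - b * f y \<le> l1norm (a *\<^sub>R x - b *\<^sub>R y))}"

definition dstar :: "(real^'k \<Rightarrow> real) \<Rightarrow> (real^'k \<Rightarrow> real) \<Rightarrow> real" where
  "dstar u v = (SUP f\<in>D1. lin_ext f u - lin_ext f v)"

definition Zset :: "(real^'k) set \<Rightarrow> ((real^'k \<Rightarrow> real) \<times> real) set" where
  "Zset X = fin_dist X \<times> {0..1}"

definition dZ :: "(real^'k \<Rightarrow> real) \<times> real \<Rightarrow> (real^'k \<Rightarrow> real) \<times> real \<Rightarrow> real" where
  "dZ z z' = max (dstar (fst z) (fst z')) \<bar>snd z - snd z'\<bar>"

definition zcomb :: "real \<Rightarrow> ('x \<Rightarrow> real) \<times> real \<Rightarrow> ('x \<Rightarrow> real) \<times> real \<Rightarrow> ('x \<Rightarrow> real) \<times> real" where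
  "zcomb l z z' = ((\<lambda>y. l * fst z y + (1 - l) * fst z' y), l * snd z + (1 - l) * snd z')"

definition act_q :: "('x \<Rightarrow> 'a \<Rightarrow> ('x \<Rightarrow> real)) \<Rightarrow> 'x \<Rightarrow> ('a \<Rightarrow> real) \<Rightarrow> ('x \<Rightarrow> real)" where
  "act_q q x \<sigma> = (\<lambda>y. \<Sum>a\<in>fsupp \<sigma>. \<sigma> a * q x a y)"

definition act_g :: "('x \<Rightarrow> 'a \<Rightarrow> real) \<Rightarrow> 'x \<Rightarrow> ('a \<Rightarrow> real) \<Rightarrow> real" where
  "act_g g x \<sigma> = (\<Sum>a\<in>fsupp \<sigma>. \<sigma> a * g x a)"

definition Fhat :: "'x set \<Rightarrow> 'a set \<Rightarrow> ('x \<Rightarrow> 'a \<Rightarrow> ('x \<Rightarrow> real)) \<Rightarrow> ('x \<Rightarrow> 'a \<Rightarrow> real)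
                    \<Rightarrow> ('x \<Rightarrow> real) \<times> real \<Rightarrow> (('x \<Rightarrow> real) \<times> real) set" where
  "Fhat X A q g z =
     {((\<lambda>y. \<Sum>x\<in>fsupp (fst z). fst z x * act_q q x (\<sigma> x) y),
       (\<Sum>x\<in>fsupp (fst z). fst z x * act_g g x (\<sigma> x))) | \<sigma>. \<forall>x\<in>X. \<sigma> x \<in> fin_dist A}"

end

theory Submission
  imports Defs
begin

text \<open>
  Both halves become transparent once an element of \<open>Fhat (u, y)\<close> is written as the
  outcome of the joint law \<open>u(x) \<sigma>(x)(a)\<close> of state and action (\<open>Fhat_outcome\<close>): outcomes
  are linear in the joint law, and two strategies weighted by two beliefs merge into a single
  posterior-mixed strategy, which gives affinity (\<open>Fhat_affine\<close>).

  For non-expansiveness, fix \<open>w\<close> produced by \<open>\<sigma>\<close> at \<open>u\<close>; we need one strategy \<open>\<sigma>'\<close> at \<open>u'\<close>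
  whose outcome is close to \<open>w\<close> simultaneously for all test functionals in \<open>D1\<close> and for the
  payoff.  Against a single (convex combination of) test functionals a pure best reply does
  the job: its value function satisfies the \<open>D1\<close> inequality by the hypotheses on \<open>q, g\<close>,
  extends to an element of \<open>D1\<close> by an inf-convolution (McShane-type) construction, and is
  therefore controlled by \<open>dstar u u'\<close>.  A minimax lemma for finitely many pure replies, proved
  by induction from the two-dimensional case, yields one mixture of pure replies that works
  for all tests, and this mixture is realised by a behavioural strategy.
\<close>

lemma l1norm_nonneg: "0 \<le> l1norm x"
  by (simp add: l1norm_def sum_nonneg)

lemma l1norm_zero [simp]: "l1norm 0 = 0"
  by (simp add: l1norm_def)

lemma l1norm_uminus [simp]: "l1norm (- x) = l1norm x"
  by (simp add: l1norm_def)

lemma l1norm_triangle: "l1norm (x + y) \<le> l1norm x + l1norm y"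
  unfolding l1norm_def by (simp add: sum.distrib[symmetric] sum_mono abs_triangle_ineq)

lemma l1norm_scale: "l1norm (c *\<^sub>R x) = \<bar>c\<bar> * l1norm x"
  by (simp add: l1norm_def abs_mult sum_distrib_left)

lemma l1norm_minus_commute: "l1norm (x - y) = l1norm (y - x)"
  by (simp add: l1norm_def abs_minus_commute)

lemma l1norm_Delta_K: "x \<in> Delta_K \<Longrightarrow> l1norm x = 1"
  by (simp add: l1norm_def Delta_K_def)

lemma l1norm_le_norm: "l1norm (x::real^'k) \<le> real CARD('k) * norm x"
proof -
  have "l1norm x \<le> (\<Sum>i\<in>(UNIV::'k set). norm x)"
    unfolding l1norm_def by (rule sum_mono) (metis component_le_norm_cart real_norm_def)
  then show ?thesis by simp
qed

lemma lin_ext_superset: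
  assumes "finite U" "fsupp v \<subseteq> U"
  shows "lin_ext f v = (\<Sum>t\<in>U. v t * f t)"
  unfolding lin_ext_def by (rule sum.mono_neutral_left) (use assms in \<open>auto simp: fsupp_def\<close>)

lemma fin_dist_nonneg: "u \<in> fin_dist S \<Longrightarrow> 0 \<le> u x"
  by (simp add: fin_dist_def)

lemma fin_dist_finite: "u \<in> fin_dist S \<Longrightarrow> finite (fsupp u)"
  by (simp add: fin_dist_def)

lemma fin_dist_subset: "u \<in> fin_dist S \<Longrightarrow> fsupp u \<subseteq> S"
  by (simp add: fin_dist_def)

lemma fin_dist_restrict: "u \<in> fin_dist S \<Longrightarrow> fsupp u \<subseteq> T \<Longrightarrow> u \<in> fin_dist T"
  by (simp add: fin_dist_def)

lemma fin_dist_support_nonempty: "u \<in> fin_dist S \<Longrightarrow> fsupp u \<noteq> {}"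
  by (auto simp: fin_dist_def)

lemma lin_ext_const: "u \<in> fin_dist S \<Longrightarrow> lin_ext (\<lambda>_. c) u = c"
  unfolding lin_ext_def fin_dist_def by (simp add: sum_distrib_right[symmetric] del: sum_distrib_right)

lemma lin_ext_mono:
  assumes "u \<in> fin_dist S" "\<And>x. x \<in> fsupp u \<Longrightarrow> f x \<le> h x"
  shows "lin_ext f u \<le> lin_ext h u"
  unfolding lin_ext_def using assms fin_dist_nonneg by (intro sum_mono mult_left_mono) auto

lemma lin_ext_cong:
  assumes "\<And>x. x \<in> fsupp u \<Longrightarrow> f x = h x"
  shows "lin_ext f u = lin_ext h u"
  unfolding lin_ext_def using assms by simp

lemma lin_ext_lin:
  "lin_ext (\<lambda>x. s * f x + r * h x) v = s * lin_ext f v + r * lin_ext h v"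
  unfolding lin_ext_def by (simp add: sum.distrib sum_distrib_left algebra_simps)

lemma lin_ext_scale: "lin_ext (\<lambda>x. s * f x) v = s * lin_ext f v"
  unfolding lin_ext_def by (simp add: sum_distrib_left mult.left_commute)

lemma lin_ext_zero [simp]: "lin_ext (\<lambda>_. 0) v = 0"
  by (simp add: lin_ext_def)

lemma fsupp_sum_subset: "fsupp (\<lambda>t. \<Sum>i\<in>I. c i * v i t) \<subseteq> (\<Union>i\<in>I. fsupp (v i))"
proof
  fix t assume "t \<in> fsupp (\<lambda>t. \<Sum>i\<in>I. c i * v i t)"
  then have "(\<Sum>i\<in>I. c i * v i t) \<noteq> 0" by (simp add: fsupp_def)
  then obtain i where "i \<in> I" "c i * v i t \<noteq> 0" by (meson sum.neutral)
  then show "t \<in> (\<Union>i\<in>I. fsupp (v i))" by (auto simp: fsupp_def)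
qed

lemma lin_ext_sum:
  assumes "finite I" "\<forall>i\<in>I. finite (fsupp (v i))"
  shows "lin_ext f (\<lambda>t. \<Sum>i\<in>I. c i * v i t) = (\<Sum>i\<in>I. c i * lin_ext f (v i))"
proof -
  define U where "U = (\<Union>i\<in>I. fsupp (v i))"
  have U: "finite U" "\<And>i. i \<in> I \<Longrightarrow> fsupp (v i) \<subseteq> U"
    using assms by (auto simp: U_def)
  have "lin_ext f (\<lambda>t. \<Sum>i\<in>I. c i * v i t) = (\<Sum>t\<in>U. (\<Sum>i\<in>I. c i * v i t) * f t)"
    using fsupp_sum_subset[of c v I] by (intro lin_ext_superset[OF U(1)]) (simp add: U_def)
  also have "\<dots> = (\<Sum>i\<in>I. c i * (\<Sum>t\<in>U. v i t * f t))"
    by (simp add: sum_distrib_left sum_distrib_right sum.swap[of _ U] mult.assoc)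
  also have "\<dots> = (\<Sum>i\<in>I. c i * lin_ext f (v i))"
    using lin_ext_superset[OF U(1) U(2)] by simp
  finally show ?thesis .
qed

lemma lin_ext_mix:
  assumes "finite (fsupp v)" "finite (fsupp w)"
  shows "lin_ext f (\<lambda>t. a * v t + b * w t) = a * lin_ext f v + b * lin_ext f w"
  using lin_ext_sum[of UNIV "\<lambda>i. if i then v else w" f "\<lambda>i. if i then a else b"] assms
  by (simp add: UNIV_bool add.commute)

lemma fin_dist_convex_sum:
  assumes "finite J" "\<forall>j\<in>J. 0 \<le> \<mu> j" "sum \<mu> J = 1" "\<forall>j\<in>J. \<rho> j \<in> fin_dist A"
  shows "(\<lambda>a. \<Sum>j\<in>J. \<mu> j * \<rho> j a) \<in> fin_dist A"
proof -
  define U where "U = (\<Union>j\<in>J. fsupp (\<rho> j))"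
  have U: "finite U" "U \<subseteq> A" "\<And>j. j \<in> J \<Longrightarrow> fsupp (\<rho> j) \<subseteq> U"
    using assms(1,4) fin_dist_finite fin_dist_subset by (fastforce simp: U_def)+
  have supp: "fsupp (\<lambda>a. \<Sum>j\<in>J. \<mu> j * \<rho> j a) \<subseteq> U"
    using fsupp_sum_subset by (simp add: U_def)
  have "sum (\<lambda>a. \<Sum>j\<in>J. \<mu> j * \<rho> j a) (fsupp (\<lambda>a. \<Sum>j\<in>J. \<mu> j * \<rho> j a))
        = lin_ext (\<lambda>_. 1) (\<lambda>a. \<Sum>j\<in>J. \<mu> j * \<rho> j a)"
    by (simp add: lin_ext_def)
  also have "\<dots> = (\<Sum>j\<in>J. \<mu> j * lin_ext (\<lambda>_. 1) (\<rho> j))"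
    using assms(1,4) fin_dist_finite by (intro lin_ext_sum) auto
  also have "\<dots> = sum \<mu> J"
    using assms(4) lin_ext_const by (intro sum.cong) auto
  finally have "sum (\<lambda>a. \<Sum>j\<in>J. \<mu> j * \<rho> j a) (fsupp (\<lambda>a. \<Sum>j\<in>J. \<mu> j * \<rho> j a)) = 1"
    using assms(3) by simp
  moreover have "0 \<le> (\<Sum>j\<in>J. \<mu> j * \<rho> j a)" for a
    using assms(2,4) by (auto intro!: sum_nonneg mult_nonneg_nonneg intro: fin_dist_nonneg)
  ultimately show ?thesis
    using finite_subset[OF supp U(1)] order_trans[OF supp U(2)] by (simp add: fin_dist_def)
qed

lemma fin_dist_convex:
  assumes "\<rho>1 \<in> fin_dist A" "\<rho>2 \<in> fin_dist A" "0 \<le> s" "s \<le> 1"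
  shows "(\<lambda>a. s * \<rho>1 a + (1 - s) * \<rho>2 a) \<in> fin_dist A"
  using fin_dist_convex_sum[of UNIV "\<lambda>i. if i then s else 1 - s" "\<lambda>i. if i then \<rho>1 else \<rho>2" A] assms
  by (simp add: UNIV_bool add.commute)

definition dirac :: "'a \<Rightarrow> 'a \<Rightarrow> real" where
  "dirac a = (\<lambda>b. if b = a then 1 else 0)"

lemma fsupp_dirac: "fsupp (dirac a) = {a}"
  by (simp add: fsupp_def dirac_def)

lemma dirac_fin_dist: "a \<in> A \<Longrightarrow> dirac a \<in> fin_dist A"
  by (simp add: fin_dist_def fsupp_dirac) (simp add: dirac_def)

lemma lin_ext_dirac: "lin_ext f (dirac a) = f a"
  by (simp add: lin_ext_def fsupp_dirac) (simp add: dirac_def)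

lemma D1_bound:
  assumes "f \<in> D1" "x \<in> Delta_K" shows "\<bar>f x\<bar> \<le> 1"
proof -
  have "a * f x - b * f x \<le> l1norm (a *\<^sub>R x - b *\<^sub>R x)" if "0 \<le> a" "0 \<le> b" for a b
    using assms that unfolding D1_def by blast
  from this[of 1 0] this[of 0 1] show ?thesis
    using l1norm_Delta_K[OF assms(2)] l1norm_scale[of "-1" x] by simp
qed

lemma zero_D1: "(\<lambda>_. 0) \<in> D1"
  unfolding D1_def by (simp add: l1norm_nonneg)

lemma D1_convex:
  assumes "f1 \<in> D1" "f2 \<in> D1" "0 \<le> w1" "0 \<le> w2" "w1 + w2 = 1"
  shows "(\<lambda>x. w1 * f1 x + w2 * f2 x) \<in> D1"
proof -
  have "a * (w1 * f1 x + w2 * f2 x) - b * (w1 * f1 y + w2 * f2 y) \<le> l1norm (a *\<^sub>R x - b *\<^sub>R y)"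
    if "x \<in> Delta_K" "y \<in> Delta_K" "0 \<le> a" "0 \<le> b" for x y a b
  proof -
    let ?N = "l1norm (a *\<^sub>R x - b *\<^sub>R y)"
    have "a * f1 x - b * f1 y \<le> ?N" "a * f2 x - b * f2 y \<le> ?N"
      using assms(1,2) that unfolding D1_def by blast+
    then have "w1 * (a * f1 x - b * f1 y) + w2 * (a * f2 x - b * f2 y) \<le> w1 * ?N + w2 * ?N"
      using assms(3,4) by (intro add_mono mult_left_mono)
    also have "\<dots> = ?N" using assms(5) by (metis distrib_right mult_1)
    finally show ?thesis by (simp add: algebra_simps)
  qed
  moreover have "continuous_on Delta_K (\<lambda>x. w1 * f1 x + w2 * f2 x)"
    using assms(1,2) unfolding D1_def by (auto intro!: continuous_intros)
  ultimately show ?thesis unfolding D1_def by blast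
qed

text \<open>Expectations of test functions are bounded, so the supremum defining \<open>dstar\<close> is
  finite and dominates the gap of every test function.\<close>
lemma lin_ext_D1_bound:
  assumes "f \<in> D1" "u \<in> fin_dist X" "X \<subseteq> Delta_K"
  shows "\<bar>lin_ext f u\<bar> \<le> 1"
proof -
  have "lin_ext (\<lambda>x. - 1) u \<le> lin_ext f u" "lin_ext f u \<le> lin_ext (\<lambda>x. 1) u"
    using D1_bound[OF assms(1)] assms(3) fin_dist_subset[OF assms(2)]
    by (auto intro!: lin_ext_mono[OF assms(2)] simp: abs_le_iff)
  then show ?thesis using lin_ext_const[OF assms(2)] by (simp add: abs_le_iff)
qed

lemma dstar_ge:
  assumes "f \<in> D1" "u \<in> fin_dist X" "u' \<in> fin_dist X" "X \<subseteq> Delta_K"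
  shows "lin_ext f u - lin_ext f u' \<le> dstar u u'"
  unfolding dstar_def
proof (rule cSUP_upper[OF assms(1)])
  show "bdd_above ((\<lambda>f. lin_ext f u - lin_ext f u') ` D1)"
    using lin_ext_D1_bound[OF _ assms(2,4)] lin_ext_D1_bound[OF _ assms(3,4)]
    by (intro bdd_aboveI2[of _ _ 2]) (smt (verit))
qed

subsection \<open>Extension of \<open>D1\<close>-Lipschitz functions\<close>

text \<open>A function on a nonempty set \<open>T \<subseteq> \<Delta>(K)\<close> satisfying the defining inequality of \<open>D1\<close>
  extends to an element of \<open>D1\<close>: the largest such extension is the inf-convolution
  below, in the spirit of McShane's extension of Lipschitz functions.\<close>
definition D1_envelope :: "(real^'k) set \<Rightarrow> (real^'k \<Rightarrow> real) \<Rightarrow> real^'k \<Rightarrow> real" where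
  "D1_envelope T H z = Inf {s * H x + l1norm (z - s *\<^sub>R x) | x s. x \<in> T \<and> 0 \<le> s}"

context
  fixes T :: "(real^'k) set" and H :: "real^'k \<Rightarrow> real"
  assumes T_ne: "T \<noteq> {}" and T_sub: "T \<subseteq> Delta_K"
    and H_lip: "\<forall>x\<in>T. \<forall>y\<in>T. \<forall>\<alpha> \<beta>. 0 \<le> \<alpha> \<longrightarrow> 0 \<le> \<beta> \<longrightarrow>
                  \<alpha> * H x - \<beta> * H y \<le> l1norm (\<alpha> *\<^sub>R x - \<beta> *\<^sub>R y)"
begin

lemma envelope_candidate_lower:
  assumes "x \<in> T" "0 \<le> s"
  shows "- l1norm z \<le> s * H x + l1norm (z - s *\<^sub>R x)"
proof -
  have x: "l1norm x = 1" using assms(1) T_sub l1norm_Delta_K by blast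
  have "- 1 \<le> H x" using H_lip[rule_format, of x x 0 1] assms(1) x by simp
  then have "- s \<le> s * H x" using mult_left_mono[of "- 1" "H x" s] assms(2) by simp
  moreover have "s - l1norm z \<le> l1norm (z - s *\<^sub>R x)"
    using l1norm_triangle[of "s *\<^sub>R x - z" z] l1norm_scale[of s x] x assms(2)
      l1norm_minus_commute[of z "s *\<^sub>R x"] by simp
  ultimately show ?thesis by linarith
qed

lemma envelope_le:
  assumes "x \<in> T" "0 \<le> s"
  shows "D1_envelope T H z \<le> s * H x + l1norm (z - s *\<^sub>R x)"
proof -
  let ?C = "{s * H x + l1norm (z - s *\<^sub>R x) | x s. x \<in> T \<and> 0 \<le> s}"
  have "bdd_below ?C" using envelope_candidate_lower by (fastforce intro: bdd_belowI)
  moreover have "s * H x + l1norm (z - s *\<^sub>R x) \<in> ?C" using assms by blast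
  ultimately show ?thesis unfolding D1_envelope_def by (intro cInf_lower)
qed

lemma envelope_ge:
  assumes "\<And>x s. x \<in> T \<Longrightarrow> 0 \<le> s \<Longrightarrow> c \<le> s * H x + l1norm (z - s *\<^sub>R x)"
  shows "c \<le> D1_envelope T H z"
proof -
  obtain x0 where "x0 \<in> T" using T_ne by blast
  then have "{s * H x + l1norm (z - s *\<^sub>R x) | x s. x \<in> T \<and> 0 \<le> s} \<noteq> {}" by blast
  then show ?thesis unfolding D1_envelope_def using assms by (intro cInf_greatest) auto
qed

lemma envelope_eq:
  assumes "x \<in> T" shows "D1_envelope T H x = H x"
proof (rule antisym)
  show "D1_envelope T H x \<le> H x" using envelope_le[OF assms, of 1 x] by simp
  show "H x \<le> D1_envelope T H x"
  proof (rule envelope_ge)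
    fix y s assume "y \<in> T" "0 \<le> (s::real)"
    then show "H x \<le> s * H y + l1norm (x - s *\<^sub>R y)"
      using H_lip[rule_format, of x y 1 s] assms by simp
  qed
qed

lemma envelope_shift:
  assumes z: "z \<in> Delta_K" "z' \<in> Delta_K" and ab: "0 \<le> a" "0 < b" and x: "x \<in> T" "0 \<le> s"
  shows "a * D1_envelope T H z \<le> b * (s * H x + l1norm (z' - s *\<^sub>R x)) + l1norm (a *\<^sub>R z - b *\<^sub>R z')"
proof (cases "a = 0")
  case True
  have "- 1 \<le> s * H x + l1norm (z' - s *\<^sub>R x)"
    using envelope_candidate_lower[OF x, of z'] l1norm_Delta_K[OF z(2)] by simp
  then have "- b \<le> b * (s * H x + l1norm (z' - s *\<^sub>R x))"
    using ab(2) mult_left_mono[of "- 1" _ b] by simp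
  moreover have "l1norm (a *\<^sub>R z - b *\<^sub>R z') = b"
    using True ab(2) l1norm_scale[of "- b" z'] l1norm_Delta_K[OF z(2)] by simp
  ultimately show ?thesis using True by simp
next
  case False
  then have a: "0 < a" using ab by simp
  have "a * D1_envelope T H z \<le> a * ((b * s / a) * H x + l1norm (z - (b * s / a) *\<^sub>R x))"
    using envelope_le[OF x(1), of "b * s / a" z] a ab(2) x(2) by simp
  also have "\<dots> = b * s * H x + l1norm (a *\<^sub>R z - (b * s) *\<^sub>R x)"
    using a l1norm_scale[of a "z - (b * s / a) *\<^sub>R x"] by (simp add: algebra_simps)
  also have "l1norm (a *\<^sub>R z - (b * s) *\<^sub>R x) \<le> l1norm (a *\<^sub>R z - b *\<^sub>R z') + b * l1norm (z' - s *\<^sub>R x)"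
    using l1norm_triangle[of "a *\<^sub>R z - b *\<^sub>R z'" "b *\<^sub>R (z' - s *\<^sub>R x)"]
      l1norm_scale[of b "z' - s *\<^sub>R x"] ab(2)
    by (simp add: algebra_simps)
  finally show ?thesis by (simp add: algebra_simps)
qed

lemma envelope_D1_ineq:
  assumes z: "z \<in> Delta_K" "z' \<in> Delta_K" and ab: "0 \<le> a" "0 \<le> b"
  shows "a * D1_envelope T H z - b * D1_envelope T H z' \<le> l1norm (a *\<^sub>R z - b *\<^sub>R z')"
proof (cases "b = 0")
  case True
  obtain x0 where "x0 \<in> T" using T_ne by blast
  then have "D1_envelope T H z \<le> 1" using envelope_le[of x0 0 z] l1norm_Delta_K[OF z(1)] by simp
  then show ?thesis using True ab l1norm_scale[of a z] l1norm_Delta_K[OF z(1)]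
    by (simp add: mult_left_le)
next
  case False
  then have b: "0 < b" using ab by simp
  let ?N = "l1norm (a *\<^sub>R z - b *\<^sub>R z')"
  have "(a * D1_envelope T H z - ?N) / b \<le> D1_envelope T H z'"
    using envelope_shift[OF z ab(1) b] b by (intro envelope_ge) (simp add: pos_divide_le_eq algebra_simps)
  then show ?thesis using b by (simp add: pos_divide_le_eq algebra_simps)
qed

lemma D1_extension: "\<exists>f\<in>D1. \<forall>x\<in>T. f x = H x"
proof (intro bexI[of _ "D1_envelope T H"] ballI envelope_eq)
  have "dist (D1_envelope T H x) (D1_envelope T H y) \<le> real CARD('k) * dist x y"
    if "x \<in> Delta_K" "y \<in> Delta_K" for x y
  proof -
    have "\<bar>D1_envelope T H x - D1_envelope T H y\<bar> \<le> l1norm (x - y)"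
      using envelope_D1_ineq[OF that, of 1 1] envelope_D1_ineq[OF that(2,1), of 1 1]
        l1norm_minus_commute[of y x] by (simp add: abs_le_iff)
    also have "\<dots> \<le> real CARD('k) * norm (x - y)" by (rule l1norm_le_norm)
    finally show ?thesis by (simp add: dist_norm)
  qed
  then have "continuous_on Delta_K (D1_envelope T H)"
    by (intro lipschitz_on_continuous_on[of "real CARD('k)"]) (auto simp: lipschitz_on_def)
  then show "D1_envelope T H \<in> D1"
    unfolding D1_def using envelope_D1_ineq by blast
qed

end

lemma dstar_bounds_gap:
  assumes X_sub: "X \<subseteq> Delta_K" and u: "u \<in> fin_dist X" "u' \<in> fin_dist X"
    and H_lip: "\<forall>x\<in>fsupp u \<union> fsupp u'. \<forall>y\<in>fsupp u \<union> fsupp u'. \<forall>\<alpha> \<beta>. 0 \<le> \<alpha> \<longrightarrow> 0 \<le> \<beta> \<longrightarrow>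
                  \<alpha> * H x - \<beta> * H y \<le> l1norm (\<alpha> *\<^sub>R x - \<beta> *\<^sub>R y)"
  shows "lin_ext H u - lin_ext H u' \<le> dstar u u'"
proof -
  have "fsupp u \<union> fsupp u' \<noteq> {}" "fsupp u \<union> fsupp u' \<subseteq> Delta_K"
    using fin_dist_support_nonempty[OF u(1)] X_sub fin_dist_subset[OF u(1)] fin_dist_subset[OF u(2)]
    by auto
  from D1_extension[OF this H_lip] obtain f where f: "f \<in> D1" "\<forall>x\<in>fsupp u \<union> fsupp u'. f x = H x"
    by blast
  have "lin_ext f u = lin_ext H u" "lin_ext f u' = lin_ext H u'"
    using f(2) by (auto intro!: lin_ext_cong)
  with dstar_ge[OF f(1) u X_sub] show ?thesis by simp
qed

subsection \<open>A minimax lemma for finitely many pure replies\<close>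

text \<open>If no point of a convex set in the plane lies strictly above \<open>(d, d)\<close>, then the segment
  from a point right of \<open>d\<close> to a point above \<open>d\<close> avoids that open quadrant; this is a
  determinant inequality between the two points (shifted by \<open>d\<close>).\<close>
lemma segment_avoids_quadrant:
  fixes C :: "(real \<times> real) set"
  assumes C: "convex C" and reply: "\<forall>c\<in>C. fst c \<le> d \<or> snd c \<le> d"
    and c: "c \<in> C" "d < fst c" and c': "c' \<in> C" "d < snd c'"
  shows "(fst c - d) * (snd c' - d) \<le> (fst c' - d) * (snd c - d)"
proof (rule ccontr)
  define a where "a = fst c - d"
  define b where "b = snd c - d"
  define a' where "a' = fst c' - d"
  define b' where "b' = snd c' - d"
  assume "\<not> ?thesis"
  then have gt: "a' * b < a * b'" by (simp add: a_def b_def a'_def b'_def)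
  have signs: "0 < a" "b \<le> 0" "a' \<le> 0" "0 < b'"
    using reply c c' by (force simp: a_def b_def a'_def b'_def)+
  \<comment> \<open>The point of the segment where both shifted coordinates are equal lies in the quadrant.\<close>
  define D where "D = b' - a' + a - b"
  define t where "t = (b' - a') / D"
  have D: "0 < D" using signs by (simp add: D_def)
  have t: "0 \<le> t" "0 \<le> 1 - t" "1 - t = (a - b) / D"
    using signs D by (auto simp: t_def D_def field_simps)
  have "t * a + (1 - t) * a' = ((b' - a') * a + (a - b) * a') / D"
       "t * b + (1 - t) * b' = ((b' - a') * b + (a - b) * b') / D"
    by (simp_all only: t(3)) (simp_all add: t_def add_divide_distrib)
  moreover have "(b' - a') * a + (a - b) * a' = a * b' - a' * b"
                "(b' - a') * b + (a - b) * b' = a * b' - a' * b"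
    by (simp_all add: algebra_simps)
  moreover have "0 < (a * b' - a' * b) / D" using gt D by simp
  ultimately have "0 < t * a + (1 - t) * a'" "0 < t * b + (1 - t) * b'" by simp_all
  then have "d < fst (t *\<^sub>R c + (1 - t) *\<^sub>R c')" "d < snd (t *\<^sub>R c + (1 - t) *\<^sub>R c')"
    by (simp_all add: a_def b_def a'_def b'_def algebra_simps)
  moreover have "t *\<^sub>R c + (1 - t) *\<^sub>R c' \<in> C" using convexD[OF C] c(1) c'(1) t by simp
  ultimately show False using reply by fastforce
qed

lemma two_point_minimax:
  fixes C :: "(real \<times> real) set"
  assumes C: "convex C" and reply: "\<forall>c\<in>C. fst c \<le> d \<or> snd c \<le> d"
  shows "\<exists>s\<in>{0..1}. \<forall>c\<in>C. s * fst c + (1 - s) * snd c \<le> d"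
proof -
  define C1 where "C1 = {c\<in>C. d < fst c}"
  define C2 where "C2 = {c\<in>C. d < snd c}"
  \<comment> \<open>On \<open>C1\<close> the admissible weights form \<open>[0, hi c]\<close>, on \<open>C2\<close> they form \<open>[lo c, 1]\<close>.\<close>
  define lo where "lo c = (snd c - d) / (snd c - fst c)" for c :: "real \<times> real"
  define hi where "hi c = (d - snd c) / (fst c - snd c)" for c :: "real \<times> real"
  have C1: "snd c \<le> d" if "c \<in> C1" for c using that reply by (force simp: C1_def)
  have C2: "fst c \<le> d" if "c \<in> C2" for c using that reply by (force simp: C2_def)
  have lo01: "0 \<le> lo c \<and> lo c \<le> 1" if "c \<in> C2" for c
    using C2[OF that] that by (auto simp: C2_def lo_def divide_simps)
  have cross: "lo c' \<le> hi c" if c: "c \<in> C1" and c': "c' \<in> C2" for c c'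
  proof -
    have "(fst c - d) * (snd c' - d) \<le> (fst c' - d) * (snd c - d)"
      using segment_avoids_quadrant[OF C reply] c c' by (simp add: C1_def C2_def)
    then show ?thesis using C1[OF c] C2[OF c'] c c'
      by (simp add: lo_def hi_def C1_def C2_def divide_simps algebra_simps)
  qed
  define s where "s = (if C2 = {} then 0 else Sup (lo ` C2))"
  have bdd: "bdd_above (lo ` C2)" using lo01 by (auto intro: bdd_aboveI[of _ 1])
  have s01: "s \<in> {0..1}"
    using lo01 bdd by (auto simp: s_def intro: cSup_least order_trans[OF _ cSup_upper])
  have "s * fst c + (1 - s) * snd c \<le> d" if c: "c \<in> C" for c
  proof (cases "c \<in> C2")
    case True
    then have "lo c \<le> s" using bdd by (auto simp: s_def intro: cSup_upper)
    moreover have "fst c \<le> snd c" using True C2[OF True] by (simp add: C2_def)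
    ultimately have "lo c * (snd c - fst c) \<le> s * (snd c - fst c)"
      by (intro mult_right_mono) auto
    moreover have "lo c * (snd c - fst c) = snd c - d"
      using True C2[OF True] by (simp add: lo_def C2_def)
    ultimately show ?thesis by (simp add: algebra_simps)
  next
    case notC2: False
    show ?thesis
    proof (cases "c \<in> C1")
      case True
      have "s \<le> hi c"
        using cross[OF True] True C1[OF True] by (auto simp: s_def hi_def C1_def intro: cSup_least)
      then have "s * (fst c - snd c) \<le> hi c * (fst c - snd c)"
        using True C1[OF True] by (intro mult_right_mono) (auto simp: C1_def)
      moreover have "hi c * (fst c - snd c) = d - snd c"
        using True C1[OF True] by (simp add: hi_def C1_def)
      ultimately show ?thesis by (simp add: algebra_simps)
    next
      case False
      then have "fst c \<le> d" "snd c \<le> d" using notC2 c by (auto simp: C1_def C2_def)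
      then show ?thesis using s01 convex_bound_le[of "fst c" d "snd c" s "1 - s"] by simp
    qed
  qed
  then show ?thesis using s01 by blast
qed

definition mix_closed :: "('j \<Rightarrow> real) set \<Rightarrow> bool" where
  "mix_closed K \<longleftrightarrow> (\<forall>k\<in>K. \<forall>k'\<in>K. \<forall>s\<in>{0..1}. (\<lambda>j. s * k j + (1 - s) * k' j) \<in> K)"

lemma mix_closed_upper:
  assumes "mix_closed K"
  shows "mix_closed {k\<in>K. d < k r}"
  unfolding mix_closed_def
proof (intro ballI)
  fix k k' and s :: real assume k: "k \<in> {k\<in>K. d < k r}" "k' \<in> {k\<in>K. d < k r}" and s: "s \<in> {0..1}"
  have "s * d + (1 - s) * d < s * k r + (1 - s) * k' r"
  proof (cases "s = 0")
    case False
    then have "s * d < s * k r" using k s by (auto intro!: mult_strict_left_mono)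
    moreover have "(1 - s) * d \<le> (1 - s) * k' r" using k s by (auto intro!: mult_left_mono)
    ultimately show ?thesis by linarith
  qed (use k in auto)
  then show "(\<lambda>j. s * k j + (1 - s) * k' j) \<in> {k\<in>K. d < k r}"
    using assms k s by (auto simp: mix_closed_def algebra_simps)
qed

lemma convex_pair_image:
  assumes "mix_closed K"
  shows "convex ((\<lambda>k. ((\<Sum>j\<in>J. \<mu> j * k j), k r)) ` K)"
proof (rule convexI)
  fix c c' and u v :: real
  assume "c \<in> (\<lambda>k. ((\<Sum>j\<in>J. \<mu> j * k j), k r)) ` K" "c' \<in> (\<lambda>k. ((\<Sum>j\<in>J. \<mu> j * k j), k r)) ` K"
    and uv: "0 \<le> u" "0 \<le> v" "u + v = 1"
  then obtain k k' where k: "k \<in> K" "k' \<in> K"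
    and c: "c = ((\<Sum>j\<in>J. \<mu> j * k j), k r)" "c' = ((\<Sum>j\<in>J. \<mu> j * k' j), k' r)"
    by blast
  define k'' where "k'' = (\<lambda>j. u * k j + (1 - u) * k' j)"
  have "k'' \<in> K" using assms k uv by (simp add: mix_closed_def k''_def)
  moreover have "(\<Sum>j\<in>J. \<mu> j * k'' j) = (\<Sum>j\<in>J. u * (\<mu> j * k j) + (1 - u) * (\<mu> j * k' j))"
    by (rule sum.cong) (simp_all add: k''_def algebra_simps)
  then have "(\<Sum>j\<in>J. \<mu> j * k'' j) = u * (\<Sum>j\<in>J. \<mu> j * k j) + (1 - u) * (\<Sum>j\<in>J. \<mu> j * k' j)"
    by (simp add: sum.distrib sum_distrib_left)
  ultimately show "u *\<^sub>R c + v *\<^sub>R c' \<in> (\<lambda>k. ((\<Sum>j\<in>J. \<mu> j * k j), k r)) ` K"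
    using c uv by (intro image_eqI[of _ _ k'']) (simp_all add: k''_def)
qed

text \<open>Induction on \<open>J\<close>, reducing each step to two coordinates.\<close>
lemma finite_minimax:
  fixes K :: "('j \<Rightarrow> real) set"
  assumes "finite J" "J \<noteq> {}" and "mix_closed K" and "\<forall>k\<in>K. \<exists>j\<in>J. k j \<le> d"
  shows "\<exists>\<mu>. (\<forall>j\<in>J. 0 \<le> \<mu> j) \<and> sum \<mu> J = 1 \<and> (\<forall>k\<in>K. (\<Sum>j\<in>J. \<mu> j * k j) \<le> d)"
  using assms
proof (induction J arbitrary: K rule: finite_ne_induct)
  case (singleton j)
  then show ?case by (intro exI[of _ "\<lambda>_. 1"]) auto
next
  case (insert j0 J)
  note mix = insert.prems(1) and reply = insert.prems(2)
  \<comment> \<open>Vectors on which the reply \<open>j0\<close> fails are handled by a mixture over \<open>J\<close>.\<close>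
  define K' where "K' = {k\<in>K. d < k j0}"
  have "\<forall>k\<in>K'. \<exists>j\<in>J. k j \<le> d" using reply by (fastforce simp: K'_def)
  with insert.IH[OF mix_closed_upper[OF mix, where d=d and r=j0, folded K'_def]]
  obtain \<mu>' where \<mu>': "\<forall>j\<in>J. 0 \<le> \<mu>' j" "sum \<mu>' J = 1" "\<forall>k\<in>K'. (\<Sum>j\<in>J. \<mu>' j * k j) \<le> d"
    by blast
  \<comment> \<open>It remains to mix \<open>\<mu>'\<close> with \<open>j0\<close>, a problem with two coordinates.\<close>
  define C where "C = (\<lambda>k. ((\<Sum>j\<in>J. \<mu>' j * k j), k j0)) ` K"
  have "\<forall>c\<in>C. fst c \<le> d \<or> snd c \<le> d" using \<mu>'(3) by (force simp: C_def K'_def)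
  with two_point_minimax[OF convex_pair_image[OF mix, where \<mu>=\<mu>' and J=J and r=j0, folded C_def]]
  obtain s where s: "s \<in> {0..1}" "\<forall>c\<in>C. s * fst c + (1 - s) * snd c \<le> d"
    by blast
  define \<mu> where "\<mu> j = (if j = j0 then 1 - s else s * \<mu>' j)" for j
  have on_J: "(\<Sum>j\<in>J. \<mu> j * f j) = s * (\<Sum>j\<in>J. \<mu>' j * f j)" for f :: "'j \<Rightarrow> real"
  proof -
    have "(\<Sum>j\<in>J. \<mu> j * f j) = (\<Sum>j\<in>J. s * (\<mu>' j * f j))"
      using insert.hyps by (intro sum.cong) (auto simp: \<mu>_def)
    then show ?thesis by (simp add: sum_distrib_left)
  qed
  show ?case
  proof (intro exI[of _ \<mu>] conjI ballI)
    show "0 \<le> \<mu> j" if "j \<in> insert j0 J" for j using that s \<mu>'(1) by (auto simp: \<mu>_def)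
    show "sum \<mu> (insert j0 J) = 1"
      using on_J[of "\<lambda>_. 1"] \<mu>'(2) insert.hyps by (simp add: \<mu>_def)
    show "(\<Sum>j\<in>insert j0 J. \<mu> j * k j) \<le> d" if "k \<in> K" for k
      using on_J[of k] s(2) that insert.hyps by (force simp: \<mu>_def C_def algebra_simps)
  qed
qed

subsection \<open>Strategies, joint laws and outcomes\<close>

definition strategies :: "'x set \<Rightarrow> 'a set \<Rightarrow> ('x \<Rightarrow> 'a \<Rightarrow> real) set" where
  "strategies X A = {\<sigma>. \<forall>x\<in>X. \<sigma> x \<in> fin_dist A}"

definition joint :: "('x \<Rightarrow> real) \<Rightarrow> ('x \<Rightarrow> 'a \<Rightarrow> real) \<Rightarrow> 'x \<times> 'a \<Rightarrow> real" where
  "joint u \<sigma> = (\<lambda>(x, a). u x * \<sigma> x a)"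

definition outcome ::
    "('x \<Rightarrow> 'a \<Rightarrow> ('x \<Rightarrow> real)) \<Rightarrow> ('x \<Rightarrow> 'a \<Rightarrow> real) \<Rightarrow> ('x \<times> 'a \<Rightarrow> real) \<Rightarrow> ('x \<Rightarrow> real) \<times> real" where
  "outcome q g m = ((\<lambda>y. lin_ext (\<lambda>(x, a). q x a y) m), lin_ext (\<lambda>(x, a). g x a) m)"

lemma fsupp_joint: "fsupp (joint u \<sigma>) \<subseteq> Sigma (fsupp u) (\<lambda>x. fsupp (\<sigma> x))"
  by (auto simp: fsupp_def joint_def)

lemma strategy_finite_on_support:
  assumes "u \<in> fin_dist X" "\<sigma> \<in> strategies X A"
  shows "\<forall>x\<in>fsupp u. finite (fsupp (\<sigma> x))"
  using assms fin_dist_finite fin_dist_subset unfolding strategies_def by blast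

lemma strategy_action_support:
  assumes "u \<in> fin_dist X" "\<sigma> \<in> strategies X A"
  shows "finite (\<Union>x\<in>fsupp u. fsupp (\<sigma> x))" "(\<Union>x\<in>fsupp u. fsupp (\<sigma> x)) \<subseteq> A"
    "\<forall>x\<in>fsupp u. \<sigma> x \<in> fin_dist (\<Union>x\<in>fsupp u. fsupp (\<sigma> x))"
proof -
  have \<sigma>_u: "\<sigma> x \<in> fin_dist A" if "x \<in> fsupp u" for x
    using that fin_dist_subset[OF assms(1)] assms(2) by (auto simp: strategies_def)
  show "finite (\<Union>x\<in>fsupp u. fsupp (\<sigma> x))"
    by (intro finite_UN_I fin_dist_finite[OF assms(1)] fin_dist_finite[OF \<sigma>_u])
  show "(\<Union>x\<in>fsupp u. fsupp (\<sigma> x)) \<subseteq> A" using fin_dist_subset[OF \<sigma>_u] by blast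
  show "\<forall>x\<in>fsupp u. \<sigma> x \<in> fin_dist (\<Union>x\<in>fsupp u. fsupp (\<sigma> x))"
    using \<sigma>_u by (blast intro: fin_dist_restrict)
qed

lemma finite_fsupp_joint:
  assumes "u \<in> fin_dist X" "\<sigma> \<in> strategies X A"
  shows "finite (fsupp (joint u \<sigma>))"
  using fin_dist_finite[OF assms(1)] strategy_finite_on_support[OF assms]
  by (intro finite_subset[OF fsupp_joint] finite_SigmaI) auto

lemma lin_ext_joint:
  assumes "finite (fsupp u)" "\<forall>x\<in>fsupp u. finite (fsupp (\<sigma> x))"
  shows "lin_ext k (joint u \<sigma>) = lin_ext (\<lambda>x. lin_ext (\<lambda>a. k (x, a)) (\<sigma> x)) u"
proof -
  have "lin_ext k (joint u \<sigma>) = (\<Sum>z\<in>Sigma (fsupp u) (\<lambda>x. fsupp (\<sigma> x)). joint u \<sigma> z * k z)"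
    using assms fsupp_joint by (intro lin_ext_superset) auto
  also have "\<dots> = (\<Sum>x\<in>fsupp u. \<Sum>a\<in>fsupp (\<sigma> x). joint u \<sigma> (x, a) * k (x, a))"
    using sum.Sigma[OF assms, of "\<lambda>x a. joint u \<sigma> (x, a) * k (x, a)"] by (simp add: split_def)
  also have "\<dots> = (\<Sum>x\<in>fsupp u. u x * (\<Sum>a\<in>fsupp (\<sigma> x). \<sigma> x a * k (x, a)))"
    by (simp add: joint_def sum_distrib_left mult.assoc)
  finally show ?thesis by (simp add: lin_ext_def)
qed

lemma lin_ext_joint_strategy:
  assumes "u \<in> fin_dist X" "\<sigma> \<in> strategies X A"
  shows "lin_ext k (joint u \<sigma>) = lin_ext (\<lambda>x. lin_ext (\<lambda>a. k (x, a)) (\<sigma> x)) u"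
  using fin_dist_finite[OF assms(1)] strategy_finite_on_support[OF assms] by (rule lin_ext_joint)

lemma Fhat_outcome:
  assumes "u \<in> fin_dist X"
  shows "Fhat X A q g (u, y) = {outcome q g (joint u \<sigma>) | \<sigma>. \<sigma> \<in> strategies X A}"
proof -
  have eq: "((\<lambda>y. \<Sum>x\<in>fsupp u. u x * act_q q x (\<sigma> x) y), (\<Sum>x\<in>fsupp u. u x * act_g g x (\<sigma> x)))
            = outcome q g (joint u \<sigma>)"
    if "\<sigma> \<in> strategies X A" for \<sigma>
    using lin_ext_joint_strategy[OF assms that]
    by (simp add: outcome_def lin_ext_def act_q_def act_g_def case_prod_beta)
  show ?thesis
    unfolding Fhat_def fst_conv
  proof (intro Collect_cong iffI)
    fix w assume "\<exists>\<sigma>. w = ((\<lambda>y. \<Sum>x\<in>fsupp u. u x * act_q q x (\<sigma> x) y),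
        (\<Sum>x\<in>fsupp u. u x * act_g g x (\<sigma> x))) \<and> (\<forall>x\<in>X. \<sigma> x \<in> fin_dist A)"
    then show "\<exists>\<sigma>. w = outcome q g (joint u \<sigma>) \<and> \<sigma> \<in> strategies X A"
      using eq unfolding strategies_def by auto
  next
    fix w assume "\<exists>\<sigma>. w = outcome q g (joint u \<sigma>) \<and> \<sigma> \<in> strategies X A"
    then obtain \<sigma> where "\<sigma> \<in> strategies X A" "w = outcome q g (joint u \<sigma>)" by blast
    then show "\<exists>\<sigma>. w = ((\<lambda>y. \<Sum>x\<in>fsupp u. u x * act_q q x (\<sigma> x) y),
        (\<Sum>x\<in>fsupp u. u x * act_g g x (\<sigma> x))) \<and> (\<forall>x\<in>X. \<sigma> x \<in> fin_dist A)"
      using eq[of \<sigma>] unfolding strategies_def by (intro exI[of _ \<sigma>]) auto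
  qed
qed

lemma outcome_mix:
  assumes "finite (fsupp m1)" "finite (fsupp m2)"
  shows "outcome q g (\<lambda>z. l * m1 z + (1 - l) * m2 z) = zcomb l (outcome q g m1) (outcome q g m2)"
  using assms by (simp add: outcome_def zcomb_def lin_ext_mix)

lemma strategy_posterior_mix:
  assumes "\<sigma>1 \<in> strategies X A" "\<sigma>2 \<in> strategies X A" "\<And>x. 0 \<le> c1 x" "\<And>x. 0 \<le> c2 x"
  shows "\<exists>\<sigma>\<in>strategies X A. \<forall>x a. (c1 x + c2 x) * \<sigma> x a = c1 x * \<sigma>1 x a + c2 x * \<sigma>2 x a"
proof -
  define s where "s x = c1 x / (c1 x + c2 x)" for x
  define \<sigma> where "\<sigma> x = (if c1 x + c2 x = 0 then \<sigma>1 x else (\<lambda>a. s x * \<sigma>1 x a + (1 - s x) * \<sigma>2 x a))"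
    for x
  have "0 \<le> s x" "s x \<le> 1" if "c1 x + c2 x \<noteq> 0" for x
    using assms(3,4)[of x] that by (auto simp: s_def divide_le_eq_1)
  then have "\<sigma> \<in> strategies X A"
    using assms(1,2) unfolding strategies_def \<sigma>_def by (auto intro: fin_dist_convex)
  moreover have "(c1 x + c2 x) * \<sigma> x a = c1 x * \<sigma>1 x a + c2 x * \<sigma>2 x a" for x a
  proof (cases "c1 x + c2 x = 0")
    case True
    then have "c1 x = 0" "c2 x = 0" using assms(3,4)[of x] by linarith+
    then show ?thesis by simp
  next
    case False
    then have "(c1 x + c2 x) * s x = c1 x" "(c1 x + c2 x) * (1 - s x) = c2 x"
      by (simp_all add: s_def field_simps)
    then show ?thesis using False by (simp add: \<sigma>_def distrib_left mult.assoc[symmetric])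
  qed
  ultimately show ?thesis by blast
qed

lemma Fhat_affine:
  assumes "z \<in> Zset X" "z' \<in> Zset X" "l \<in> {0..1}"
  shows "Fhat X A q g (zcomb l z z') =
           {zcomb l w w' | w w'. w \<in> Fhat X A q g z \<and> w' \<in> Fhat X A q g z'}"
proof -
  obtain u y u' y' where zs: "z = (u, y)" "z' = (u', y')" and u: "u \<in> fin_dist X" "u' \<in> fin_dist X"
    using assms(1,2) by (auto simp: Zset_def)
  define ul where "ul = (\<lambda>x. l * u x + (1 - l) * u' x)"
  have ul: "ul \<in> fin_dist X" and zc: "zcomb l z z' = (ul, l * y + (1 - l) * y')"
    using fin_dist_convex[OF u] assms(3) by (auto simp: ul_def zs zcomb_def)
  have split: "joint ul \<sigma> = (\<lambda>z. l * joint u \<sigma>1 z + (1 - l) * joint u' \<sigma>2 z)"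
    if "\<forall>x a. ul x * \<sigma> x a = l * u x * \<sigma>1 x a + (1 - l) * u' x * \<sigma>2 x a" for \<sigma> \<sigma>1 \<sigma>2
    using that by (auto simp: joint_def mult.assoc)
  have mix: "outcome q g (joint ul \<sigma>) = zcomb l (outcome q g (joint u \<sigma>1)) (outcome q g (joint u' \<sigma>2))"
    if "\<sigma>1 \<in> strategies X A" "\<sigma>2 \<in> strategies X A"
       "\<forall>x a. ul x * \<sigma> x a = l * u x * \<sigma>1 x a + (1 - l) * u' x * \<sigma>2 x a" for \<sigma> \<sigma>1 \<sigma>2
    unfolding split[OF that(3)] using that(1,2) u
    by (intro outcome_mix finite_fsupp_joint) auto
  show ?thesis
  proof (intro set_eqI iffI)
    fix w assume "w \<in> Fhat X A q g (zcomb l z z')"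
    then obtain \<sigma> where \<sigma>: "\<sigma> \<in> strategies X A" "w = outcome q g (joint ul \<sigma>)"
      unfolding zc Fhat_outcome[OF ul] by blast
    then have "w = zcomb l (outcome q g (joint u \<sigma>)) (outcome q g (joint u' \<sigma>))"
      using mix[OF \<sigma>(1) \<sigma>(1), of \<sigma>] by (simp add: ul_def algebra_simps)
    then show "w \<in> {zcomb l w w' | w w'. w \<in> Fhat X A q g z \<and> w' \<in> Fhat X A q g z'}"
      unfolding zs Fhat_outcome[OF u(1)] Fhat_outcome[OF u(2)] using \<sigma>(1) by blast
  next
    fix w assume "w \<in> {zcomb l w w' | w w'. w \<in> Fhat X A q g z \<and> w' \<in> Fhat X A q g z'}"
    then obtain \<sigma>1 \<sigma>2 where \<sigma>12: "\<sigma>1 \<in> strategies X A" "\<sigma>2 \<in> strategies X A"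
      and w: "w = zcomb l (outcome q g (joint u \<sigma>1)) (outcome q g (joint u' \<sigma>2))"
      unfolding zs Fhat_outcome[OF u(1)] Fhat_outcome[OF u(2)] by blast
    obtain \<sigma> where \<sigma>: "\<sigma> \<in> strategies X A"
      "\<forall>x a. ul x * \<sigma> x a = l * u x * \<sigma>1 x a + (1 - l) * u' x * \<sigma>2 x a"
      using strategy_posterior_mix[OF \<sigma>12, of "\<lambda>x. l * u x" "\<lambda>x. (1 - l) * u' x"] assms(3)
        fin_dist_nonneg[OF u(1)] fin_dist_nonneg[OF u(2)]
      by (auto simp: ul_def)
    then have "w = outcome q g (joint ul \<sigma>)"
      using mix[OF \<sigma>12 \<sigma>(2)] w by simp
    then show "w \<in> Fhat X A q g (zcomb l z z')"
      unfolding zc Fhat_outcome[OF ul] using \<sigma>(1) by blast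
  qed
qed

subsection \<open>Test functionals\<close>

text \<open>The test pairs are the convex
  hull of \<open>D1 \<times> {0}\<close> and \<open>(0, \<plusminus>1)\<close>: testing against them controls both components of \<open>dZ\<close>.\<close>
definition test_pairs :: "((real^'k \<Rightarrow> real) \<times> real) set" where
  "test_pairs = {((\<lambda>x. t * f x), e) | t f e. f \<in> D1 \<and> 0 \<le> t \<and> t + \<bar>e\<bar> \<le> 1}"

definition pay :: "('x \<Rightarrow> real) \<times> real \<Rightarrow> ('x \<Rightarrow> real) \<times> real \<Rightarrow> real" where
  "pay \<phi> w = lin_ext (fst \<phi>) (fst w) + snd \<phi> * snd w"

definition reward ::
    "('x \<Rightarrow> 'a \<Rightarrow> ('x \<Rightarrow> real)) \<Rightarrow> ('x \<Rightarrow> 'a \<Rightarrow> real) \<Rightarrow> ('x \<Rightarrow> real) \<times> real \<Rightarrow> 'x \<times> 'a \<Rightarrow> real" where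
  "reward q g \<phi> = (\<lambda>(x, a). lin_ext (fst \<phi>) (q x a) + snd \<phi> * g x a)"

lemma test_pairs_mix:
  assumes "\<phi> \<in> test_pairs" "\<psi> \<in> test_pairs" "s \<in> {0..1}"
  shows "((\<lambda>x. s * fst \<phi> x + (1 - s) * fst \<psi> x), s * snd \<phi> + (1 - s) * snd \<psi>) \<in> test_pairs"
proof -
  obtain t1 f1 t2 f2 where \<phi>: "fst \<phi> = (\<lambda>x. t1 * f1 x)" "f1 \<in> D1" "0 \<le> t1" "t1 + \<bar>snd \<phi>\<bar> \<le> 1"
    and \<psi>: "fst \<psi> = (\<lambda>x. t2 * f2 x)" "f2 \<in> D1" "0 \<le> t2" "t2 + \<bar>snd \<psi>\<bar> \<le> 1"
    using assms(1,2) by (auto simp: test_pairs_def)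
  have s: "0 \<le> s" "0 \<le> 1 - s" using assms(3) by auto
  define t where "t = s * t1 + (1 - s) * t2"
  have t: "0 \<le> t" using \<phi>(3) \<psi>(3) s by (simp add: t_def)
  have "\<bar>s * snd \<phi> + (1 - s) * snd \<psi>\<bar> \<le> s * \<bar>snd \<phi>\<bar> + (1 - s) * \<bar>snd \<psi>\<bar>"
    using s by (metis abs_mult abs_of_nonneg abs_triangle_ineq)
  also have "\<dots> \<le> s * (1 - t1) + (1 - s) * (1 - t2)"
    using \<phi>(4) \<psi>(4) s by (intro add_mono mult_left_mono) auto
  finally have e: "t + \<bar>s * snd \<phi> + (1 - s) * snd \<psi>\<bar> \<le> 1" by (simp add: t_def algebra_simps)
  \<comment> \<open>The mixed function is \<open>t\<close> times a convex combination of \<open>f1, f2\<close> (or zero if \<open>t = 0\<close>).\<close>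
  obtain f where f: "f \<in> D1" "\<And>x. s * fst \<phi> x + (1 - s) * fst \<psi> x = t * f x"
  proof (cases "t = 0")
    case True
    then have z: "s * t1 = 0" "(1 - s) * t2 = 0"
      using \<phi>(3) \<psi>(3) s by (simp_all add: t_def add_nonneg_eq_0_iff)
    have "s * fst \<phi> x + (1 - s) * fst \<psi> x = t * 0" for x
      unfolding \<phi>(1) \<psi>(1) mult.assoc[symmetric] z by simp
    then show ?thesis using that[OF zero_D1] by blast
  next
    case False
    then have "0 < t" using t by simp
    moreover have "(\<lambda>x. (s * t1 / t) * f1 x + ((1 - s) * t2 / t) * f2 x) \<in> D1"
      using \<phi>(2,3) \<psi>(2,3) s \<open>0 < t\<close>
      by (intro D1_convex) (auto simp: t_def add_divide_distrib[symmetric])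
    moreover have "s * fst \<phi> x + (1 - s) * fst \<psi> x
                   = t * ((s * t1 / t) * f1 x + ((1 - s) * t2 / t) * f2 x)" for x
      using \<open>0 < t\<close> unfolding \<phi>(1) \<psi>(1) by (simp add: field_simps)
    ultimately show ?thesis using that by blast
  qed
  show ?thesis
    unfolding test_pairs_def using f t e by (auto intro!: exI[of _ t] exI[of _ f])
qed

lemma reward_mix:
  "reward q g ((\<lambda>x. s * fst \<phi> x + (1 - s) * fst \<psi> x), s * snd \<phi> + (1 - s) * snd \<psi>)
     = (\<lambda>z. s * reward q g \<phi> z + (1 - s) * reward q g \<psi> z)"
  unfolding reward_def split_def fst_conv snd_conv lin_ext_lin by (simp add: algebra_simps)

lemma losses_mix_closed:
  "mix_closed ((\<lambda>\<phi> p. lin_ext (reward q g \<phi>) m - lin_ext (\<lambda>y. reward q g \<phi> (y, p y)) v) ` test_pairs)"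
  unfolding mix_closed_def
proof (intro ballI)
  let ?loss = "\<lambda>\<phi> p. lin_ext (reward q g \<phi>) m - lin_ext (\<lambda>y. reward q g \<phi> (y, p y)) v"
  fix \<kappa> \<kappa>' s assume "\<kappa> \<in> ?loss ` test_pairs" "\<kappa>' \<in> ?loss ` test_pairs" and s: "s \<in> {0..1::real}"
  then obtain \<phi> \<psi> where \<phi>\<psi>: "\<phi> \<in> test_pairs" "\<psi> \<in> test_pairs" "\<kappa> = ?loss \<phi>" "\<kappa>' = ?loss \<psi>"
    by blast
  define mixed where "mixed = ((\<lambda>x. s * fst \<phi> x + (1 - s) * fst \<psi> x), s * snd \<phi> + (1 - s) * snd \<psi>)"
  have "(\<lambda>p. s * \<kappa> p + (1 - s) * \<kappa>' p) = ?loss mixed"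
    unfolding \<phi>\<psi>(3,4) mixed_def reward_mix lin_ext_lin by (simp add: algebra_simps)
  moreover have "mixed \<in> test_pairs" unfolding mixed_def using \<phi>\<psi>(1,2) s by (rule test_pairs_mix)
  ultimately show "(\<lambda>p. s * \<kappa> p + (1 - s) * \<kappa>' p) \<in> ?loss ` test_pairs" by blast
qed

lemma D1_test_pair: "f \<in> D1 \<Longrightarrow> (f, 0) \<in> test_pairs"
  unfolding test_pairs_def by (auto intro!: exI[of _ 1] exI[of _ f])

lemma payoff_test_pair: "\<bar>e\<bar> \<le> 1 \<Longrightarrow> ((\<lambda>_. 0), e) \<in> test_pairs"
  unfolding test_pairs_def using zero_D1 by (auto intro!: exI[of _ 0])

lemma dZ_bound_by_tests:
  assumes "\<forall>\<phi>\<in>test_pairs. pay \<phi> w - pay \<phi> w' \<le> d"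
  shows "dstar (fst w) (fst w') \<le> d" "\<bar>snd w - snd w'\<bar> \<le> d"
proof -
  show "dstar (fst w) (fst w') \<le> d"
    unfolding dstar_def
  proof (intro cSUP_least)
    show "D1 \<noteq> {}" using zero_D1 by blast
    fix f :: "real^'a \<Rightarrow> real" assume "f \<in> D1"
    then have "(f, 0) \<in> test_pairs" by (rule D1_test_pair)
    then show "lin_ext f (fst w) - lin_ext f (fst w') \<le> d"
      using assms by (fastforce simp: pay_def)
  qed
  show "\<bar>snd w - snd w'\<bar> \<le> d"
    using assms payoff_test_pair by (force simp: pay_def abs_le_iff dest: bspec[of _ _ "((\<lambda>_. 0), 1)"]
                                                     bspec[of _ _ "((\<lambda>_. 0), -1)"])
qed

lemma pay_outcome:
  assumes "finite (fsupp m)" "\<forall>z\<in>fsupp m. finite (fsupp (q (fst z) (snd z)))"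
  shows "pay \<phi> (outcome q g m) = lin_ext (reward q g \<phi>) m"
proof -
  have "fst (outcome q g m) = (\<lambda>y. \<Sum>z\<in>fsupp m. m z * q (fst z) (snd z) y)"
    by (simp add: outcome_def lin_ext_def split_def)
  then have "lin_ext (fst \<phi>) (fst (outcome q g m)) =
             (\<Sum>z\<in>fsupp m. m z * lin_ext (fst \<phi>) (q (fst z) (snd z)))"
    using lin_ext_sum[OF assms] by simp
  then show ?thesis
    by (simp add: pay_def outcome_def reward_def lin_ext_def split_def
        sum_distrib_left sum.distrib algebra_simps)
qed

lemma pay_outcome_joint:
  assumes "u \<in> fin_dist X" "\<sigma> \<in> strategies X A" "\<forall>x\<in>X. \<forall>a\<in>A. q x a \<in> fin_dist X"
  shows "pay \<phi> (outcome q g (joint u \<sigma>)) = lin_ext (reward q g \<phi>) (joint u \<sigma>)"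
proof (rule pay_outcome)
  show "finite (fsupp (joint u \<sigma>))" using assms(1,2) by (rule finite_fsupp_joint)
  have "fst z \<in> X" "snd z \<in> A" if "z \<in> fsupp (joint u \<sigma>)" for z
  proof -
    have "fst z \<in> fsupp u" and a: "snd z \<in> fsupp (\<sigma> (fst z))"
      using that fsupp_joint[of u \<sigma>] by (cases z; auto)+
    then show x: "fst z \<in> X" using fin_dist_subset[OF assms(1)] by blast
    show "snd z \<in> A" using x a assms(2) fin_dist_subset unfolding strategies_def by blast
  qed
  then show "\<forall>z\<in>fsupp (joint u \<sigma>). finite (fsupp (q (fst z) (snd z)))"
    using assms(3) fin_dist_finite by blast
qed

lemma reward_lipschitz:
  assumes q_lip: "\<forall>x\<in>X. \<forall>y\<in>X. \<forall>a\<in>A. \<forall>f\<in>D1. \<forall>\<alpha> \<beta>. 0 \<le> \<alpha> \<longrightarrow> 0 \<le> \<beta> \<longrightarrow>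
        \<bar>\<alpha> * lin_ext f (q x a) - \<beta> * lin_ext f (q y a)\<bar> \<le> l1norm (\<alpha> *\<^sub>R x - \<beta> *\<^sub>R y)"
    and g_lip: "\<forall>x\<in>X. \<forall>y\<in>X. \<forall>a\<in>A. \<forall>\<alpha> \<beta>. 0 \<le> \<alpha> \<longrightarrow> 0 \<le> \<beta> \<longrightarrow>
        \<bar>\<alpha> * g x a - \<beta> * g y a\<bar> \<le> l1norm (\<alpha> *\<^sub>R x - \<beta> *\<^sub>R y)"
    and \<phi>: "\<phi> \<in> test_pairs" and xya: "x \<in> X" "y \<in> X" "a \<in> A" and \<alpha>\<beta>: "0 \<le> \<alpha>" "0 \<le> \<beta>"
  shows "\<alpha> * reward q g \<phi> (x, a) - \<beta> * reward q g \<phi> (y, a) \<le> l1norm (\<alpha> *\<^sub>R x - \<beta> *\<^sub>R y)"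
proof -
  obtain t f e where \<phi>': "\<phi> = ((\<lambda>x. t * f x), e)" "f \<in> D1" "0 \<le> t" "t + \<bar>e\<bar> \<le> 1"
    using \<phi> by (auto simp: test_pairs_def)
  let ?N = "l1norm (\<alpha> *\<^sub>R x - \<beta> *\<^sub>R y)"
  let ?Dq = "\<alpha> * lin_ext f (q x a) - \<beta> * lin_ext f (q y a)"
  let ?Dg = "\<alpha> * g x a - \<beta> * g y a"
  have "\<bar>?Dq\<bar> \<le> ?N" using q_lip xya \<alpha>\<beta> \<phi>'(2) by blast
  then have "t * ?Dq \<le> t * ?N" using \<phi>'(3) by (intro mult_left_mono) auto
  moreover have "e * ?Dg \<le> \<bar>e\<bar> * ?N"
  proof -
    have "e * ?Dg \<le> \<bar>e\<bar> * \<bar>?Dg\<bar>" by (metis abs_ge_self abs_mult)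
    also have "\<dots> \<le> \<bar>e\<bar> * ?N" using g_lip xya \<alpha>\<beta> by (intro mult_left_mono) auto
    finally show ?thesis .
  qed
  ultimately have "t * ?Dq + e * ?Dg \<le> t * ?N + \<bar>e\<bar> * ?N" by (rule add_mono)
  also have "\<dots> \<le> ?N" using \<phi>'(4) l1norm_nonneg[of "\<alpha> *\<^sub>R x - \<beta> *\<^sub>R y"]
    by (metis distrib_right mult_1 mult_right_mono)
  finally show ?thesis
    unfolding \<phi>'(1) reward_def by (simp add: lin_ext_scale algebra_simps)
qed

text \<open>Given a reward \<open>k\<close> that is \<open>D1\<close>-Lipschitz in the state for every action, the second
  player can answer the law \<open>joint u \<sigma>\<close> with a pure strategy at \<open>u'\<close> (picking a best action
  in \<open>A0\<close> at every state) losing at most \<open>dstar u u'\<close>, because the optimal value \<open>H\<close>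
  satisfies the defining inequality of \<open>D1\<close>.\<close>
lemma best_pure_reply:
  fixes k :: "(real^'k) \<times> 'a \<Rightarrow> real"
  assumes X_sub: "X \<subseteq> Delta_K" and u: "u \<in> fin_dist X" "u' \<in> fin_dist X"
    and A0: "finite A0" "A0 \<subseteq> A" and \<sigma>: "\<forall>x\<in>fsupp u. \<sigma> x \<in> fin_dist A0"
    and k_lip: "\<forall>x\<in>X. \<forall>y\<in>X. \<forall>a\<in>A. \<forall>\<alpha> \<beta>. 0 \<le> \<alpha> \<longrightarrow> 0 \<le> \<beta> \<longrightarrow>
                  \<alpha> * k (x, a) - \<beta> * k (y, a) \<le> l1norm (\<alpha> *\<^sub>R x - \<beta> *\<^sub>R y)"
  shows "\<exists>p\<in>PiE (fsupp u') (\<lambda>_. A0). lin_ext k (joint u \<sigma>) - lin_ext (\<lambda>y. k (y, p y)) u' \<le> dstar u u'"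
proof -
  obtain x0 where x0: "x0 \<in> fsupp u" using fin_dist_support_nonempty[OF u(1)] by blast
  have "A0 \<noteq> {}"
    using fin_dist_support_nonempty[of "\<sigma> x0" A0] fin_dist_subset[of "\<sigma> x0" A0] \<sigma> x0 by blast
  define H where "H y = Max ((\<lambda>a. k (y, a)) ` A0)" for y
  have H_ge: "k (y, a) \<le> H y" if "a \<in> A0" for y a
    unfolding H_def using A0(1) that by (intro Max_ge) auto
  have "\<forall>y. \<exists>a. a \<in> A0 \<and> k (y, a) = H y"
  proof
    fix y
    have "H y \<in> (\<lambda>a. k (y, a)) ` A0" unfolding H_def using A0(1) \<open>A0 \<noteq> {}\<close> by (intro Max_in) auto
    then show "\<exists>a. a \<in> A0 \<and> k (y, a) = H y" by auto
  qed
  then obtain best where best: "\<And>y. best y \<in> A0 \<and> k (y, best y) = H y"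
    using choice[of "\<lambda>y a. a \<in> A0 \<and> k (y, a) = H y"] by blast
  have "lin_ext k (joint u \<sigma>) = lin_ext (\<lambda>x. lin_ext (\<lambda>a. k (x, a)) (\<sigma> x)) u"
    using \<sigma> by (intro lin_ext_joint fin_dist_finite[OF u(1)] ballI fin_dist_finite) auto
  also have "\<dots> \<le> lin_ext H u"
  proof (rule lin_ext_mono[OF u(1)])
    fix x assume "x \<in> fsupp u"
    then have "lin_ext (\<lambda>a. k (x, a)) (\<sigma> x) \<le> lin_ext (\<lambda>_. H x) (\<sigma> x)"
      using \<sigma> H_ge fin_dist_subset[of "\<sigma> x" A0] by (intro lin_ext_mono[of _ A0]) auto
    moreover have "lin_ext (\<lambda>_. H x) (\<sigma> x) = H x"
      using \<sigma> \<open>x \<in> fsupp u\<close> lin_ext_const[of "\<sigma> x" A0] by blast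
    ultimately show "lin_ext (\<lambda>a. k (x, a)) (\<sigma> x) \<le> H x" by simp
  qed
  finally have first: "lin_ext k (joint u \<sigma>) \<le> lin_ext H u" .
  have "\<forall>x\<in>fsupp u \<union> fsupp u'. \<forall>y\<in>fsupp u \<union> fsupp u'. \<forall>\<alpha> \<beta>. 0 \<le> \<alpha> \<longrightarrow> 0 \<le> \<beta> \<longrightarrow>
          \<alpha> * H x - \<beta> * H y \<le> l1norm (\<alpha> *\<^sub>R x - \<beta> *\<^sub>R y)"
  proof (intro ballI allI impI)
    fix x y and \<alpha> \<beta> :: real assume that: "x \<in> fsupp u \<union> fsupp u'" "y \<in> fsupp u \<union> fsupp u'" "0 \<le> \<alpha>" "0 \<le> \<beta>"
    then have "x \<in> X" "y \<in> X" using fin_dist_subset[OF u(1)] fin_dist_subset[OF u(2)] by auto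
    have "\<alpha> * H x - \<beta> * H y \<le> \<alpha> * k (x, best x) - \<beta> * k (y, best x)"
      using best[of x] H_ge[of "best x" y] that(4) by (simp add: mult_left_mono)
    also have "\<dots> \<le> l1norm (\<alpha> *\<^sub>R x - \<beta> *\<^sub>R y)"
      using k_lip[rule_format, of x y "best x" \<alpha> \<beta>] \<open>x \<in> X\<close> \<open>y \<in> X\<close> that best[of x] A0(2) by blast
    finally show "\<alpha> * H x - \<beta> * H y \<le> l1norm (\<alpha> *\<^sub>R x - \<beta> *\<^sub>R y)" .
  qed
  then have gap: "lin_ext H u - lin_ext H u' \<le> dstar u u'" by (rule dstar_bounds_gap[OF X_sub u])
  define p where "p = restrict best (fsupp u')"
  have "lin_ext (\<lambda>y. k (y, p y)) u' = lin_ext H u'"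
    using best by (intro lin_ext_cong) (simp add: p_def)
  moreover have "p \<in> PiE (fsupp u') (\<lambda>_. A0)" using best by (simp add: p_def restrict_PiE_iff)
  ultimately show ?thesis using first gap by (intro bexI[of _ p]) linarith+
qed

lemma lin_ext_joint_pure:
  assumes "finite (fsupp u)"
  shows "lin_ext k (joint u (\<lambda>y. dirac (p y))) = lin_ext (\<lambda>y. k (y, p y)) u"
  using assms by (simp add: lin_ext_joint fsupp_dirac lin_ext_dirac)

lemma finite_fsupp_joint_pure:
  assumes "finite (fsupp u)"
  shows "finite (fsupp (joint u (\<lambda>y. dirac (p y))))"
  using assms by (intro finite_subset[OF fsupp_joint] finite_SigmaI) (auto simp: fsupp_dirac)

text \<open>A mixture \<open>\<mu>\<close> of pure strategies is realised by a single behavioural strategy,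
  which plays at \<open>y\<close> the law of \<open>p y\<close> under \<open>\<mu>\<close> (Kuhn's theorem in one step).\<close>
lemma behavioural_mixture:
  assumes J: "finite J" "\<forall>p\<in>J. 0 \<le> \<mu> p" "sum \<mu> J = 1" "\<forall>p\<in>J. \<forall>y\<in>fsupp u'. p y \<in> A"
    and u': "u' \<in> fin_dist X" and \<sigma>: "\<sigma> \<in> strategies X A"
  shows "\<exists>\<sigma>'\<in>strategies X A.
           \<forall>k. lin_ext k (joint u' \<sigma>') = (\<Sum>p\<in>J. \<mu> p * lin_ext (\<lambda>y. k (y, p y)) u')"
proof
  define \<sigma>' where "\<sigma>' y = (if y \<in> fsupp u' then (\<lambda>a. \<Sum>p\<in>J. \<mu> p * dirac (p y) a) else \<sigma> y)" for y
  show "\<sigma>' \<in> strategies X A"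
    using J \<sigma> by (auto simp: strategies_def \<sigma>'_def intro!: fin_dist_convex_sum dirac_fin_dist)
  have "joint u' \<sigma>' = (\<lambda>z. \<Sum>p\<in>J. \<mu> p * joint u' (\<lambda>y. dirac (p y)) z)"
    by (auto simp: joint_def \<sigma>'_def sum_distrib_left mult.left_commute fsupp_def)
  then show "\<forall>k. lin_ext k (joint u' \<sigma>') = (\<Sum>p\<in>J. \<mu> p * lin_ext (\<lambda>y. k (y, p y)) u')"
    using J(1) fin_dist_finite[OF u']
    by (simp add: lin_ext_sum finite_fsupp_joint_pure lin_ext_joint_pure)
qed

subsection \<open>Non-expansiveness\<close>

text \<open>For each test pair a pure best reply
  exists; the set of test pairs is convex and the rewards are affine in it, so the minimax
  lemma mixes the pure replies into one, which is realised by a behavioural strategy.\<close>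
lemma uniform_reply:
  fixes X :: "(real^'k) set" and A :: "'a set"
    and q :: "real^'k \<Rightarrow> 'a \<Rightarrow> (real^'k \<Rightarrow> real)" and g :: "real^'k \<Rightarrow> 'a \<Rightarrow> real"
  assumes X_sub: "X \<subseteq> Delta_K"
    and q_dist: "\<forall>x\<in>X. \<forall>a\<in>A. q x a \<in> fin_dist X"
    and q_lip: "\<forall>x\<in>X. \<forall>y\<in>X. \<forall>a\<in>A. \<forall>f\<in>D1. \<forall>\<alpha> \<beta>. 0 \<le> \<alpha> \<longrightarrow> 0 \<le> \<beta> \<longrightarrow>
        \<bar>\<alpha> * lin_ext f (q x a) - \<beta> * lin_ext f (q y a)\<bar> \<le> l1norm (\<alpha> *\<^sub>R x - \<beta> *\<^sub>R y)"
    and g_lip: "\<forall>x\<in>X. \<forall>y\<in>X. \<forall>a\<in>A. \<forall>\<alpha> \<beta>. 0 \<le> \<alpha> \<longrightarrow> 0 \<le> \<beta> \<longrightarrow>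
        \<bar>\<alpha> * g x a - \<beta> * g y a\<bar> \<le> l1norm (\<alpha> *\<^sub>R x - \<beta> *\<^sub>R y)"
    and u: "u \<in> fin_dist X" "u' \<in> fin_dist X" and \<sigma>: "\<sigma> \<in> strategies X A"
  shows "\<exists>\<sigma>'\<in>strategies X A. \<forall>\<phi>\<in>test_pairs.
           pay \<phi> (outcome q g (joint u \<sigma>)) - pay \<phi> (outcome q g (joint u' \<sigma>')) \<le> dstar u u'"
proof -
  define A0 where "A0 = (\<Union>x\<in>fsupp u. fsupp (\<sigma> x))"
  note A0 = strategy_action_support[OF u(1) \<sigma>, folded A0_def]
  define J where "J = PiE (fsupp u') (\<lambda>_. A0)"
  define loss where "loss \<phi> p = lin_ext (reward q g \<phi>) (joint u \<sigma>) - lin_ext (\<lambda>y. reward q g \<phi> (y, p y)) u'"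
    for \<phi> p
  define K where "K = loss ` test_pairs"
  have best: "\<exists>p\<in>J. loss \<phi> p \<le> dstar u u'" if "\<phi> \<in> test_pairs" for \<phi>
    unfolding loss_def J_def using reward_lipschitz[OF q_lip g_lip that]
    by (intro best_pure_reply[OF X_sub u A0]) blast
  have "\<exists>\<mu>. (\<forall>p\<in>J. 0 \<le> \<mu> p) \<and> sum \<mu> J = 1 \<and> (\<forall>\<kappa>\<in>K. (\<Sum>p\<in>J. \<mu> p * \<kappa> p) \<le> dstar u u')"
  proof (rule finite_minimax)
    show "finite J" using A0(1) fin_dist_finite[OF u(2)] by (simp add: J_def finite_PiE)
    show "J \<noteq> {}" using best[OF payoff_test_pair[of 0]] by auto
    show "\<forall>\<kappa>\<in>K. \<exists>p\<in>J. \<kappa> p \<le> dstar u u'" using best by (auto simp: K_def)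
    show "mix_closed K" unfolding K_def loss_def[abs_def] by (rule losses_mix_closed)
  qed
  then obtain \<mu> where \<mu>: "\<forall>p\<in>J. 0 \<le> \<mu> p" "sum \<mu> J = 1" "\<forall>\<phi>\<in>test_pairs. (\<Sum>p\<in>J. \<mu> p * loss \<phi> p) \<le> dstar u u'"
    by (auto simp: K_def)
  obtain \<sigma>' where \<sigma>': "\<sigma>' \<in> strategies X A"
      "\<And>k. lin_ext k (joint u' \<sigma>') = (\<Sum>p\<in>J. \<mu> p * lin_ext (\<lambda>y. k (y, p y)) u')"
    using behavioural_mixture[OF _ \<mu>(1,2) _ u(2) \<sigma>] A0(1,2) fin_dist_finite[OF u(2)]
    by (auto simp: J_def finite_PiE)
  have "(\<Sum>p\<in>J. \<mu> p * loss \<phi> p) =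
        (\<Sum>p\<in>J. \<mu> p) * lin_ext (reward q g \<phi>) (joint u \<sigma>)
        - (\<Sum>p\<in>J. \<mu> p * lin_ext (\<lambda>y. reward q g \<phi> (y, p y)) u')" for \<phi>
    by (simp add: loss_def right_diff_distrib sum_subtractf sum_distrib_right)
  then have "pay \<phi> (outcome q g (joint u \<sigma>)) - pay \<phi> (outcome q g (joint u' \<sigma>')) = (\<Sum>p\<in>J. \<mu> p * loss \<phi> p)"
    for \<phi>
    unfolding pay_outcome_joint[OF u(1) \<sigma> q_dist] pay_outcome_joint[OF u(2) \<sigma>'(1) q_dist] \<sigma>'(2)
    using \<mu>(2) by simp
  then show ?thesis using \<sigma>'(1) \<mu>(3) by (intro bexI[of _ \<sigma>']) auto
qed

lemma Fhat_nonexpansive: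
  fixes X :: "(real^'k) set" and A :: "'a set"
    and q :: "real^'k \<Rightarrow> 'a \<Rightarrow> (real^'k \<Rightarrow> real)" and g :: "real^'k \<Rightarrow> 'a \<Rightarrow> real"
  assumes X_sub: "X \<subseteq> Delta_K"
    and q_dist: "\<forall>x\<in>X. \<forall>a\<in>A. q x a \<in> fin_dist X"
    and q_lip: "\<forall>x\<in>X. \<forall>y\<in>X. \<forall>a\<in>A. \<forall>f\<in>D1. \<forall>\<alpha> \<beta>. 0 \<le> \<alpha> \<longrightarrow> 0 \<le> \<beta> \<longrightarrow>
        \<bar>\<alpha> * lin_ext f (q x a) - \<beta> * lin_ext f (q y a)\<bar> \<le> l1norm (\<alpha> *\<^sub>R x - \<beta> *\<^sub>R y)"
    and g_lip: "\<forall>x\<in>X. \<forall>y\<in>X. \<forall>a\<in>A. \<forall>\<alpha> \<beta>. 0 \<le> \<alpha> \<longrightarrow> 0 \<le> \<beta> \<longrightarrow>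
        \<bar>\<alpha> * g x a - \<beta> * g y a\<bar> \<le> l1norm (\<alpha> *\<^sub>R x - \<beta> *\<^sub>R y)"
    and z: "z \<in> Zset X" "z' \<in> Zset X" and w: "w \<in> Fhat X A q g z"
  shows "\<exists>w'\<in>Fhat X A q g z'. dZ w w' \<le> dZ z z'"
proof -
  obtain u y u' y' where zs: "z = (u, y)" "z' = (u', y')" and u: "u \<in> fin_dist X" "u' \<in> fin_dist X"
    using z by (auto simp: Zset_def)
  obtain \<sigma> where \<sigma>: "\<sigma> \<in> strategies X A" "w = outcome q g (joint u \<sigma>)"
    using w unfolding zs Fhat_outcome[OF u(1)] by blast
  obtain \<sigma>' where \<sigma>': "\<sigma>' \<in> strategies X A"
    "\<forall>\<phi>\<in>test_pairs. pay \<phi> w - pay \<phi> (outcome q g (joint u' \<sigma>')) \<le> dstar u u'"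
    using uniform_reply[OF X_sub q_dist q_lip g_lip u \<sigma>(1)] \<sigma>(2) by blast
  have "dZ w (outcome q g (joint u' \<sigma>')) \<le> dstar u u'"
    using dZ_bound_by_tests[OF \<sigma>'(2)] by (simp add: dZ_def)
  also have "\<dots> \<le> dZ z z'" by (simp add: dZ_def zs)
  finally show ?thesis using \<sigma>'(1) unfolding zs Fhat_outcome[OF u(2)] by blast
qed

theorem mainTheorem16:
  fixes X :: "(real^'k) set" and A :: "'a set"
    and q :: "real^'k \<Rightarrow> 'a \<Rightarrow> (real^'k \<Rightarrow> real)"
    and g :: "real^'k \<Rightarrow> 'a \<Rightarrow> real"
  assumes X_compact: "compact X" and X_sub: "X \<subseteq> Delta_K"
    and q_dist: "\<forall>x\<in>X. \<forall>a\<in>A. q x a \<in> fin_dist X"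
    and g_range: "\<forall>x\<in>X. \<forall>a\<in>A. 0 \<le> g x a \<and> g x a \<le> 1"
    and q_lip: "\<forall>x\<in>X. \<forall>y\<in>X. \<forall>a\<in>A. \<forall>f\<in>D1. \<forall>\<alpha> \<beta>. 0 \<le> \<alpha> \<longrightarrow> 0 \<le> \<beta> \<longrightarrow>
        \<bar>\<alpha> * lin_ext f (q x a) - \<beta> * lin_ext f (q y a)\<bar> \<le> l1norm (\<alpha> *\<^sub>R x - \<beta> *\<^sub>R y)"
    and g_lip: "\<forall>x\<in>X. \<forall>y\<in>X. \<forall>a\<in>A. \<forall>\<alpha> \<beta>. 0 \<le> \<alpha> \<longrightarrow> 0 \<le> \<beta> \<longrightarrow>
        \<bar>\<alpha> * g x a - \<beta> * g y a\<bar> \<le> l1norm (\<alpha> *\<^sub>R x - \<beta> *\<^sub>R y)"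
  shows "(\<forall>z\<in>Zset X. \<forall>z'\<in>Zset X. \<forall>l\<in>{0..1}.
            Fhat X A q g (zcomb l z z') =
              {zcomb l w w' | w w'. w \<in> Fhat X A q g z \<and> w' \<in> Fhat X A q g z'})
       \<and> (\<forall>z\<in>Zset X. \<forall>z'\<in>Zset X. \<forall>w\<in>Fhat X A q g z.
            \<exists>w'\<in>Fhat X A q g z'. dZ w w' \<le> dZ z z')"
  using Fhat_affine Fhat_nonexpansive[OF X_sub q_dist q_lip g_lip] by blast

end
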